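(* Let $\mathbb{F}_q$ be a finite field, $G_4=UU_4(\mathbb{F}_q)$ the group of $4\times 4$ upper triangular unipotent matrices over $\mathbb{F}_q$, and $N_2=\{A=(a_{ij})\in G_4: a_{23}=0,\ a_{12}a_{34}\ne 0\}$. Define an equivalence relation $R$ on $N_2$ by $yRz$ iff $C_{G_4}(y)=C_{G_4}(z)$. Then the set \[X_{N_2}=\{A=(a_{ij})\in G_4: a_{12}=1,\ a_{13}=x_{13},\ a_{14}=0,\ a_{23}=0,\ a_{24}=x_{24},\ a_{34}=x_{34},\ x_{34}\in\mathbb{F}_q^*,\ x_{13},x_{24}\in\mathbb{F}_q\}\] contains exactly one element of each $R$-equivalence class of $N_2$, and $|X_{N_2}|=q^2(q-1)$.
   Context: $C_{G_4}(y)$ denotes the centralizer of $y$ in $G_4$. *)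

theory Defs
  imports Main
begin

text \<open>4x4 matrices over a ring are represented as functions nat => nat => 'a,
  with indices ranging over 1..4 and all entries outside that range equal to 0.\<close>

definition mmul4 :: "(nat \<Rightarrow> nat \<Rightarrow> 'a::comm_ring_1) \<Rightarrow> (nat \<Rightarrow> nat \<Rightarrow> 'a) \<Rightarrow> (nat \<Rightarrow> nat \<Rightarrow> 'a)" where
  "mmul4 A B = (\<lambda>i j. if i \<in> {1..4} \<and> j \<in> {1..4} then (\<Sum>k = 1..4. A i k * B k j) else 0)"

definition UU4 :: "(nat \<Rightarrow> nat \<Rightarrow> 'a::comm_ring_1) set" where
  "UU4 = {A. \<forall>i j. (i \<notin> {1..4} \<or> j \<notin> {1..4} \<longrightarrow> A i j = 0)
                 \<and> (i \<in> {1..4} \<and> i = j \<longrightarrow> A i j = 1)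
                 \<and> (i \<in> {1..4} \<and> j \<in> {1..4} \<and> j < i \<longrightarrow> A i j = 0)}"

definition cent4 :: "(nat \<Rightarrow> nat \<Rightarrow> 'a::comm_ring_1) \<Rightarrow> (nat \<Rightarrow> nat \<Rightarrow> 'a) set" where
  "cent4 y = {g \<in> UU4. mmul4 g y = mmul4 y g}"

definition N2 :: "(nat \<Rightarrow> nat \<Rightarrow> 'a::comm_ring_1) set" where
  "N2 = {A \<in> UU4. A 2 3 = 0 \<and> A 1 2 * A 3 4 \<noteq> 0}"

definition relR :: "(nat \<Rightarrow> nat \<Rightarrow> 'a::comm_ring_1) \<Rightarrow> (nat \<Rightarrow> nat \<Rightarrow> 'a) \<Rightarrow> bool" where
  "relR y z \<longleftrightarrow> cent4 y = cent4 z"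

definition XN2 :: "(nat \<Rightarrow> nat \<Rightarrow> 'a::comm_ring_1) set" where
  "XN2 = {A \<in> UU4. A 1 2 = 1 \<and> A 1 4 = 0 \<and> A 2 3 = 0 \<and> A 3 4 \<noteq> 0}"

end

theory Submission
  imports Defs
begin

text \<open>
  For y in N2 the commutation relations with an arbitrary g in G_4 reduce to g_23 = 0 and the
  single linear equation g_12 y_24 + g_13 y_34 = y_12 g_24 + y_13 g_34.  Hence the centralizer of
  y is determined exactly by the ratio (y_12 : y_13 : y_24 : y_34), and normalizing y_12 = 1
  picks the unique representative in XN2.  The elements of XN2 are parametrized freely by
  x_13, x_24 and x_34 \<noteq> 0.
\<close>

definition uu4 :: "'a::comm_ring_1 \<Rightarrow> 'a \<Rightarrow> 'a \<Rightarrow> 'a \<Rightarrow> 'a \<Rightarrow> 'a \<Rightarrow> nat \<Rightarrow> nat \<Rightarrow> 'a" where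
  "uu4 a12 a13 a14 a23 a24 a34 = (\<lambda>i j. if i \<in> {1..4} \<and> j \<in> {1..4} then
     (if i = j then 1 else if i = 1 \<and> j = 2 then a12 else if i = 1 \<and> j = 3 then a13
      else if i = 1 \<and> j = 4 then a14 else if i = 2 \<and> j = 3 then a23
      else if i = 2 \<and> j = 4 then a24 else if i = 3 \<and> j = 4 then a34 else 0) else 0)"

lemma uu4_in_UU4: "uu4 a12 a13 a14 a23 a24 a34 \<in> UU4"
  unfolding UU4_def uu4_def by auto

lemma uu4_entries [simp]:
  "uu4 a12 a13 a14 a23 a24 a34 1 2 = a12" "uu4 a12 a13 a14 a23 a24 a34 1 3 = a13"
  "uu4 a12 a13 a14 a23 a24 a34 1 4 = a14" "uu4 a12 a13 a14 a23 a24 a34 2 3 = a23"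
  "uu4 a12 a13 a14 a23 a24 a34 2 4 = a24" "uu4 a12 a13 a14 a23 a24 a34 3 4 = a34"
  unfolding uu4_def by auto

lemmas uu4_entries_Suc_0 [simp] = uu4_entries(1-3)[unfolded One_nat_def]

lemma uu4_eq_iff:
  "uu4 a12 a13 a14 a23 a24 a34 = uu4 b12 b13 b14 b23 b24 b34 \<longleftrightarrow>
   a12 = b12 \<and> a13 = b13 \<and> a14 = b14 \<and> a23 = b23 \<and> a24 = b24 \<and> a34 = b34"
  by (metis uu4_entries)

lemma UU4_eq_uu4:
  assumes "A \<in> UU4"
  shows "A = uu4 (A 1 2) (A 1 3) (A 1 4) (A 2 3) (A 2 4) (A 3 4)"
proof (intro ext)
  fix i j :: nat
  have diag: "\<And>k. k \<in> {1..4} \<Longrightarrow> A k k = 1"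
    and lower: "\<And>i j. i \<in> {1..4} \<Longrightarrow> j \<in> {1..4} \<Longrightarrow> j < i \<Longrightarrow> A i j = 0"
    and outside: "i \<notin> {1..4} \<or> j \<notin> {1..4} \<Longrightarrow> A i j = 0"
    using assms unfolding UU4_def by blast+
  show "A i j = uu4 (A 1 2) (A 1 3) (A 1 4) (A 2 3) (A 2 4) (A 3 4) i j"
  proof (cases "i \<in> {1..4} \<and> j \<in> {1..4}")
    case True
    then have "i = 1 \<or> i = 2 \<or> i = 3 \<or> i = 4" "j = 1 \<or> j = 2 \<or> j = 3 \<or> j = 4"
      by auto
    then show ?thesis
      by (elim disjE) (simp_all add: uu4_def diag lower)
  next
    case False
    with outside show ?thesis by (auto simp: uu4_def)
  qed
qed

lemma sum_1_to_4: "(\<Sum>k = 1..4::nat. f k) = f 1 + f 2 + f 3 + (f 4 :: 'a::comm_ring_1)"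
  by (simp add: numeral_eq_Suc)

lemma mmul4_uu4:
  "mmul4 (uu4 a12 a13 a14 a23 a24 a34) (uu4 b12 b13 b14 b23 b24 b34) =
   uu4 (a12 + b12) (a13 + a12 * b23 + b13) (a14 + a12 * b24 + a13 * b34 + b14)
       (a23 + b23) (a24 + a23 * b34 + b24) (a34 + b34)"
proof (intro ext)
  fix i j :: nat
  show "mmul4 (uu4 a12 a13 a14 a23 a24 a34) (uu4 b12 b13 b14 b23 b24 b34) i j =
    uu4 (a12 + b12) (a13 + a12 * b23 + b13) (a14 + a12 * b24 + a13 * b34 + b14)
        (a23 + b23) (a24 + a23 * b34 + b24) (a34 + b34) i j"
  proof (cases "i \<in> {1..4} \<and> j \<in> {1..4}")
    case True
    then have "i = 1 \<or> i = 2 \<or> i = 3 \<or> i = 4" "j = 1 \<or> j = 2 \<or> j = 3 \<or> j = 4"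
      by auto
    then show ?thesis
      unfolding mmul4_def sum_1_to_4 by (elim disjE) (simp_all add: uu4_def algebra_simps)
  next
    case False
    then show ?thesis unfolding mmul4_def uu4_def by auto
  qed
qed

lemma UU4_commute_iff:
  fixes A B :: "nat \<Rightarrow> nat \<Rightarrow> 'a::comm_ring_1"
  assumes "A \<in> UU4" "B \<in> UU4"
  shows "mmul4 A B = mmul4 B A \<longleftrightarrow>
    A 1 2 * B 2 3 = B 1 2 * A 2 3 \<and> A 2 3 * B 3 4 = B 2 3 * A 3 4 \<and>
    A 1 2 * B 2 4 + A 1 3 * B 3 4 = B 1 2 * A 2 4 + B 1 3 * A 3 4"
proof -
  have "mmul4 A B = mmul4 B A \<longleftrightarrow>
    mmul4 (uu4 (A 1 2) (A 1 3) (A 1 4) (A 2 3) (A 2 4) (A 3 4))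
          (uu4 (B 1 2) (B 1 3) (B 1 4) (B 2 3) (B 2 4) (B 3 4)) =
    mmul4 (uu4 (B 1 2) (B 1 3) (B 1 4) (B 2 3) (B 2 4) (B 3 4))
          (uu4 (A 1 2) (A 1 3) (A 1 4) (A 2 3) (A 2 4) (A 3 4))"
    using UU4_eq_uu4[OF assms(1)] UU4_eq_uu4[OF assms(2)] by simp
  then show ?thesis
    unfolding mmul4_uu4 uu4_eq_iff by (simp add: algebra_simps) blast
qed

lemma cent4_N2_iff:
  fixes y :: "nat \<Rightarrow> nat \<Rightarrow> 'a::field"
  assumes "y \<in> N2"
  shows "g \<in> cent4 y \<longleftrightarrow> g \<in> UU4 \<and> g 2 3 = 0 \<and>
    g 1 2 * y 2 4 + g 1 3 * y 3 4 = y 1 2 * g 2 4 + y 1 3 * g 3 4"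
proof -
  have y: "y \<in> UU4" "y 2 3 = 0" "y 1 2 \<noteq> 0" "y 3 4 \<noteq> 0"
    using assms unfolding N2_def by auto
  show ?thesis
    unfolding cent4_def using UU4_commute_iff[of _ y] y by auto
qed

lemma XN2_subset_N2: "XN2 \<subseteq> (N2 :: (nat \<Rightarrow> nat \<Rightarrow> 'a::field) set)"
  unfolding XN2_def N2_def by auto

definition XN2_rep :: "(nat \<Rightarrow> nat \<Rightarrow> 'a::field) \<Rightarrow> nat \<Rightarrow> nat \<Rightarrow> 'a" where
  "XN2_rep y = uu4 1 (y 1 3 / y 1 2) 0 0 (y 2 4 / y 1 2) (y 3 4 / y 1 2)"

lemma XN2_rep_in_XN2:
  assumes "y \<in> N2"
  shows "XN2_rep y \<in> XN2"
  using assms uu4_in_UU4 unfolding XN2_rep_def XN2_def N2_def by auto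

lemma cent4_XN2_rep:
  assumes "y \<in> N2"
  shows "cent4 (XN2_rep y) = cent4 y"
proof (rule set_eqI)
  fix g :: "nat \<Rightarrow> nat \<Rightarrow> 'a"
  have rep: "XN2_rep y \<in> N2"
    using XN2_subset_N2 XN2_rep_in_XN2[OF assms] by blast
  have "y 1 2 \<noteq> 0" using assms unfolding N2_def by auto
  then have "g 1 2 * (y 2 4 / y 1 2) + g 1 3 * (y 3 4 / y 1 2) = g 2 4 + (y 1 3 / y 1 2) * g 3 4
      \<longleftrightarrow> g 1 2 * y 2 4 + g 1 3 * y 3 4 = y 1 2 * g 2 4 + y 1 3 * g 3 4"
    by (simp add: field_simps)
  then show "g \<in> cent4 (XN2_rep y) \<longleftrightarrow> g \<in> cent4 y"
    unfolding cent4_N2_iff[OF assms] cent4_N2_iff[OF rep]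
    by (simp add: XN2_rep_def)
qed

lemma XN2_eq_rep_if_same_cent4:
  assumes y: "y \<in> N2" and x: "x \<in> XN2" and cent: "cent4 x = cent4 y"
  shows "x = XN2_rep y"
proof -
  define a b d e where "a = y 1 2" "b = y 1 3" "d = y 2 4" "e = y 3 4"
  have a: "a \<noteq> 0" using y unfolding N2_def a_b_d_e_def by auto
  have xU: "x \<in> UU4" and x12: "x 1 2 = 1" and x14: "x 1 4 = 0" and x23: "x 2 3 = 0"
    using x unfolding XN2_def by auto
  have eqn: "g 1 2 * x 2 4 + g 1 3 * x 3 4 = g 2 4 + x 1 3 * g 3 4" if "g \<in> cent4 y" for g
    using that cent cent4_N2_iff[OF XN2_subset_N2[THEN subsetD, OF x], of g] x12 by auto
  \<comment> \<open>Three elements of the centralizer, each isolating one of the entries x_24, x_34, x_13.\<close>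
  have "uu4 a 0 0 0 d 0 \<in> cent4 y" "uu4 0 a 0 0 e 0 \<in> cent4 y" "uu4 0 0 0 0 b (- a) \<in> cent4 y"
    unfolding cent4_N2_iff[OF y] a_b_d_e_def by (simp_all add: uu4_in_UU4 mult.commute)
  from eqn[OF this(1)] eqn[OF this(2)] eqn[OF this(3)]
  have "a * x 2 4 = d" "a * x 3 4 = e" "b = x 1 3 * a" by simp_all
  with a have "x 2 4 = d / a" "x 3 4 = e / a" "x 1 3 = b / a"
    by (simp_all add: field_simps)
  with UU4_eq_uu4[OF xU] x12 x14 x23 show ?thesis
    unfolding XN2_rep_def a_b_d_e_def by simp
qed

lemma ex1_XN2_relR:
  assumes "y \<in> (N2 :: (nat \<Rightarrow> nat \<Rightarrow> 'a::field) set)"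
  shows "\<exists>!x. x \<in> XN2 \<and> relR y x"
proof (rule ex1I[of _ "XN2_rep y"])
  show "XN2_rep y \<in> XN2 \<and> relR y (XN2_rep y)"
    using assms XN2_rep_in_XN2 cent4_XN2_rep unfolding relR_def by metis
next
  fix x assume "x \<in> XN2 \<and> relR y x"
  then show "x = XN2_rep y"
    using assms XN2_eq_rep_if_same_cent4 unfolding relR_def by metis
qed

lemma XN2_eq_image:
  "XN2 = (\<lambda>(a13, a24, a34). uu4 1 a13 0 0 a24 a34) ` (UNIV \<times> UNIV \<times> (UNIV - {0 :: 'a::comm_ring_1}))"
proof (intro set_eqI iffI)
  fix x :: "nat \<Rightarrow> nat \<Rightarrow> 'a"
  assume x: "x \<in> XN2"
  then have "x = uu4 1 (x 1 3) 0 0 (x 2 4) (x 3 4)" "x 3 4 \<noteq> 0"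
    using UU4_eq_uu4[of x] unfolding XN2_def by auto
  then show "x \<in> (\<lambda>(a13, a24, a34). uu4 1 a13 0 0 a24 a34) ` (UNIV \<times> UNIV \<times> (UNIV - {0}))"
    by (intro image_eqI[where x = "(x 1 3, x 2 4, x 3 4)"]) auto
qed (auto simp: XN2_def uu4_in_UU4)

lemma card_XN2:
  "card (XN2 :: (nat \<Rightarrow> nat \<Rightarrow> 'a::{field,finite}) set) = card (UNIV :: 'a set)^2 * (card (UNIV :: 'a set) - 1)"
proof -
  have inj: "inj (\<lambda>(a13, a24, a34 :: 'a). uu4 1 a13 0 0 a24 a34)"
    by (auto simp: inj_def uu4_eq_iff)
  have "card (XN2 :: (nat \<Rightarrow> nat \<Rightarrow> 'a) set) = card ((UNIV :: 'a set) \<times> (UNIV :: 'a set) \<times> (UNIV - {0 :: 'a}))"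
    unfolding XN2_eq_image by (intro card_image inj_on_subset[OF inj] subset_UNIV)
  also have "\<dots> = card (UNIV :: 'a set) * (card (UNIV :: 'a set) * (card (UNIV :: 'a set) - 1))"
    by (simp only: card_cartesian_product) (simp add: card_Diff_singleton)
  finally show ?thesis by (simp add: power2_eq_square)
qed

theorem lemma4p7:
  shows "(XN2 :: (nat \<Rightarrow> nat \<Rightarrow> 'a::{field,finite}) set) \<subseteq> N2
    \<and> (\<forall>y \<in> (N2 :: (nat \<Rightarrow> nat \<Rightarrow> 'a) set). \<exists>!x. x \<in> XN2 \<and> relR y x)
    \<and> card (XN2 :: (nat \<Rightarrow> nat \<Rightarrow> 'a) set) = card (UNIV :: 'a set)^2 * (card (UNIV :: 'a set) - 1)"
  using XN2_subset_N2 ex1_XN2_relR card_XN2 by blast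

end
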